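(* Let $G$ be a complete convex geometric graph and let $B$ be a blocker for $\mathcal{T}_{\leq 3}(G)$ that is not a star. Suppose $B$ is a caterpillar with a spine whose terminal edges $[a,a']$ and $[b',b]$ lie on the boundary of $\mathrm{conv}(G)$, where $a$ and $b$ are the endpoints of the spine (leaves of $B$) and $a'\neq b'$. Let $\alpha$ be the closed arc of the boundary of $\mathrm{conv}(G)$ with endpoints $a,b$ that contains $a'$ and $b'$, and let $\beta$ be the other closed arc with endpoints $a,b$. Then every leaf of $B$ lies on $\beta$.
   Context: A geometric graph is a graph whose vertices are points in the plane in general position (no three collinear) and whose edges are straight segments between pairs of vertices; $G$ is complete if all pairs of vertices are joined, and convex if its vertices are in convex position. $\mathrm{conv}(G)$ is the convex hull of $V(G)$. $\mathcal{T}_{\leq k}(G)$ denotes the family of all simple (non-crossing) spanning trees of $G$ of (graph) diameter at most $k$. A subgraph $B$ blocks a family $\mathcal{F}$ of subgraphs if it shares at least one edge with every member of $\mathcal{F}$; a blocker of $\mathcal{F}$ is a subgraph that blocks $\mathcal{F}$ and has the smallest possible number of edges among all subgraphs blocking $\mathcal{F}$. A star of $G$ is the set of all edges of $G$ emanating from a single vertex. A tree is a caterpillar if deleting all its leaves and their incident edges leaves a path (or empty graph); a spine is a longest path in the caterpillar. *)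

theory Defs
  imports Main
begin

text \<open>Combinatorial model of a complete convex geometric graph on n vertices:
  the vertices are 0,...,n-1, listed in the cyclic order in which they appear
  on the boundary of the convex hull. Two segments with four distinct endpoints
  cross iff their endpoints interleave in this cyclic order; segments sharing an
  endpoint never cross (general position).\<close>

definition cvx_vertices :: "nat \<Rightarrow> nat set" where
  "cvx_vertices n = {..<n}"

definition cvx_edges :: "nat \<Rightarrow> nat set set" where
  "cvx_edges n = {{u, v} | u v. u < n \<and> v < n \<and> u \<noteq> v}"

definition strictly_between :: "nat \<Rightarrow> nat \<Rightarrow> nat \<Rightarrow> bool" where
  "strictly_between a b x \<longleftrightarrow> min a b < x \<and> x < max a b"

definition crosses :: "nat set \<Rightarrow> nat set \<Rightarrow> bool" where
  "crosses e f \<longleftrightarrow> (\<exists>a b c d. e = {a, b} \<and> f = {c, d} \<and>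
      card {a, b, c, d} = 4 \<and>
      (strictly_between a b c \<noteq> strictly_between a b d))"

definition noncrossing :: "nat set set \<Rightarrow> bool" where
  "noncrossing T \<longleftrightarrow> (\<forall>e\<in>T. \<forall>f\<in>T. \<not> crosses e f)"

definition hull_edges :: "nat \<Rightarrow> nat set set" where
  "hull_edges n = {{i, Suc i mod n} | i. i < n \<and> Suc i mod n \<noteq> i}"

definition cyc_arc :: "nat \<Rightarrow> nat \<Rightarrow> nat \<Rightarrow> nat set" where
  "cyc_arc n a b = {(a + k) mod n | k. k \<le> (b + n - a) mod n}"

definition walk :: "nat set set \<Rightarrow> nat list \<Rightarrow> bool" where
  "walk T xs \<longleftrightarrow> xs \<noteq> [] \<and> (\<forall>i. Suc i < length xs \<longrightarrow> {xs ! i, xs ! Suc i} \<in> T)"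

definition gpath :: "nat set set \<Rightarrow> nat list \<Rightarrow> bool" where
  "gpath T xs \<longleftrightarrow> walk T xs \<and> distinct xs"

definition has_cycle :: "nat set set \<Rightarrow> bool" where
  "has_cycle T \<longleftrightarrow> (\<exists>xs. gpath T xs \<and> length xs \<ge> 3 \<and> {last xs, hd xs} \<in> T)"

definition connected_on :: "nat set \<Rightarrow> nat set set \<Rightarrow> bool" where
  "connected_on V T \<longleftrightarrow> (\<forall>u\<in>V. \<forall>v\<in>V. \<exists>xs. walk T xs \<and> hd xs = u \<and> last xs = v)"

definition is_tree :: "nat set \<Rightarrow> nat set set \<Rightarrow> bool" where
  "is_tree V T \<longleftrightarrow> (\<forall>e\<in>T. card e = 2 \<and> e \<subseteq> V) \<and> connected_on V T \<and> \<not> has_cycle T"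

definition diam_le :: "nat set \<Rightarrow> nat set set \<Rightarrow> nat \<Rightarrow> bool" where
  "diam_le V T k \<longleftrightarrow> (\<forall>u\<in>V. \<forall>v\<in>V. \<exists>xs. walk T xs \<and> hd xs = u \<and> last xs = v \<and> length xs \<le> Suc k)"

definition simple_trees_diam :: "nat \<Rightarrow> nat \<Rightarrow> nat set set set" where
  "simple_trees_diam n k = {T. T \<subseteq> cvx_edges n \<and> is_tree (cvx_vertices n) T
      \<and> noncrossing T \<and> diam_le (cvx_vertices n) T k}"

definition blocks :: "nat \<Rightarrow> nat set set \<Rightarrow> nat set set set \<Rightarrow> bool" where
  "blocks n B F \<longleftrightarrow> B \<subseteq> cvx_edges n \<and> (\<forall>T\<in>F. B \<inter> T \<noteq> {})"

definition is_blocker :: "nat \<Rightarrow> nat set set \<Rightarrow> nat set set set \<Rightarrow> bool" where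
  "is_blocker n B F \<longleftrightarrow> blocks n B F \<and> (\<forall>B'. blocks n B' F \<longrightarrow> card B \<le> card B')"

definition is_star :: "nat \<Rightarrow> nat set set \<Rightarrow> bool" where
  "is_star n B \<longleftrightarrow> (\<exists>v\<in>cvx_vertices n. B = {e \<in> cvx_edges n. v \<in> e})"

definition degree :: "nat set set \<Rightarrow> nat \<Rightarrow> nat" where
  "degree B v = card {e \<in> B. v \<in> e}"

definition leaves :: "nat set set \<Rightarrow> nat set" where
  "leaves B = {v. degree B v = 1}"

definition caterpillar :: "nat set set \<Rightarrow> bool" where
  "caterpillar B \<longleftrightarrow> is_tree (\<Union>B) B \<and>
     (let I = \<Union>B - leaves B; B' = {e \<in> B. e \<subseteq> I} in
        I = {} \<or> (\<exists>xs. distinct xs \<and> set xs = I \<and>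
                   B' = {{xs ! i, xs ! Suc i} | i. Suc i < length xs}))"

definition is_spine :: "nat set set \<Rightarrow> nat list \<Rightarrow> bool" where
  "is_spine B P \<longleftrightarrow> gpath B P \<and> (\<forall>Q. gpath B Q \<longrightarrow> length Q \<le> length P)"

end

theory Submission
  imports Defs
begin

text \<open>Suppose a leaf v of B, with unique neighbour u, lay strictly inside \<alpha>. Each spine end
  c \<in> {a, b} is a leaf of B with unique neighbour c'. Measuring positions on the boundary
  from v, the facts that [a, a'] and [b', b] are boundary edges and that a', b' lie on \<alpha>
  force u and c' to lie on opposite sides of c for c = a or c = b. Join v to c, join c to
  every vertex on u's side of c, and join v to all remaining vertices. This double star is a
  non-crossing spanning tree of diameter 3; each of its edges contains v or c, yet it contains
  neither {v, u} nor {c, c'}, so it avoids B, contradicting that B blocks these trees.\<close>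

definition cyc_offset :: "nat \<Rightarrow> nat \<Rightarrow> nat \<Rightarrow> nat" where
  "cyc_offset n x y = (if x \<le> y then y - x else y + n - x)"

lemma cyc_offset_lt: "x < n \<Longrightarrow> y < n \<Longrightarrow> cyc_offset n x y < n"
  by (auto simp: cyc_offset_def)

lemma cyc_offset_inj:
  "x < n \<Longrightarrow> y < n \<Longrightarrow> z < n \<Longrightarrow> cyc_offset n x y = cyc_offset n x z \<longleftrightarrow> y = z"
  by (auto simp: cyc_offset_def)

lemma cyc_offset_add_mod: "x < n \<Longrightarrow> k < n \<Longrightarrow> cyc_offset n x ((x + k) mod n) = k"
  by (cases "x + k < n") (auto simp: cyc_offset_def le_mod_geq)

lemma add_cyc_offset_mod: "x < n \<Longrightarrow> y < n \<Longrightarrow> (x + cyc_offset n x y) mod n = y"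
  by (auto simp: cyc_offset_def)

lemma mod_eq_cyc_offset: "x < n \<Longrightarrow> y < n \<Longrightarrow> (y + n - x) mod n = cyc_offset n x y"
  by (auto simp: cyc_offset_def le_mod_geq)

lemma mem_cyc_arc_iff:
  assumes "x < n" "y < n" "z < n"
  shows "y \<in> cyc_arc n x z \<longleftrightarrow> cyc_offset n x y \<le> cyc_offset n x z"
proof -
  have "y \<in> cyc_arc n x z \<longleftrightarrow> (\<exists>k \<le> cyc_offset n x z. y = (x + k) mod n)"
    using assms by (auto simp: cyc_arc_def mod_eq_cyc_offset)
  also have "\<dots> \<longleftrightarrow> cyc_offset n x y \<le> cyc_offset n x z"
    using assms cyc_offset_lt[of x n z] cyc_offset_add_mod add_cyc_offset_mod
    by (metis order.strict_trans1)
  finally show ?thesis .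
qed

lemma cyc_arc_endpoints: "x < n \<Longrightarrow> z < n \<Longrightarrow> x \<in> cyc_arc n x z \<and> z \<in> cyc_arc n x z"
  by (simp add: mem_cyc_arc_iff cyc_offset_def)

lemma mem_cyc_arc_iff_from:
  assumes "v < n" "x < n" "y < n" "z < n"
  shows "y \<in> cyc_arc n x z \<longleftrightarrow>
    (if cyc_offset n v x \<le> cyc_offset n v z
     then cyc_offset n v x \<le> cyc_offset n v y \<and> cyc_offset n v y \<le> cyc_offset n v z
     else cyc_offset n v x \<le> cyc_offset n v y \<or> cyc_offset n v y \<le> cyc_offset n v z)"
  using assms by (simp add: mem_cyc_arc_iff) (auto simp: cyc_offset_def)

lemma hull_edge_cyc_offset:
  assumes "{x, y} \<in> hull_edges n" "v < n" "x \<noteq> v" "y \<noteq> v"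
  shows "cyc_offset n v y = cyc_offset n v x + 1 \<or> cyc_offset n v x = cyc_offset n v y + 1"
proof -
  obtain i where i: "{x, y} = {i, Suc i mod n}" "i < n"
    using assms(1) unfolding hull_edges_def by auto
  have "Suc i mod n = (if Suc i < n then Suc i else 0)"
    using i(2) by (simp add: mod_Suc)
  then have "cyc_offset n v (Suc i mod n) = cyc_offset n v i + 1"
    using assms i by (cases "Suc i < n") (auto simp: cyc_offset_def doubleton_eq_iff)
  then show ?thesis using i(1) by (auto simp: doubleton_eq_iff)
qed

lemma strictly_between_iff: "strictly_between a b x \<longleftrightarrow> a < x \<and> x < b \<or> b < x \<and> x < a"
  by (auto simp: strictly_between_def)

lemma strictly_between_commute: "strictly_between b a = strictly_between a b"
  by (auto simp: fun_eq_iff strictly_between_iff)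

lemma card_4_imp_distinct: "card {a, b, c, d :: nat} = 4 \<Longrightarrow> distinct [a, b, c, d]"
  by (auto simp: card_insert_if split: if_splits)

lemma crosses_sym: "crosses e f \<Longrightarrow> crosses f e"
proof -
  assume "crosses e f"
  then obtain a b c d where ef: "e = {a, b}" "f = {c, d}" and card: "card {a, b, c, d} = 4"
    and sep: "strictly_between a b c \<noteq> strictly_between a b d"
    unfolding crosses_def by blast
  have "distinct [a, b, c, d]" using card by (rule card_4_imp_distinct)
  then have "strictly_between c d a \<noteq> strictly_between c d b"
    using sep unfolding strictly_between_iff by (simp add: neq_iff) (elim disjE conjE; linarith)
  moreover have "{c, d, a, b} = {a, b, c, d}" by auto
  ultimately show "crosses f e" unfolding crosses_def using ef card by metis
qed

lemma crosses_disjoint: "crosses e f \<Longrightarrow> e \<inter> f = {}"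
  unfolding crosses_def by (auto dest: card_4_imp_distinct)

lemma crosses_cyc_offset:
  assumes "crosses {v, w} {c, z}" "v < n" "w < n" "c < n" "z < n"
  shows "(cyc_offset n v c < cyc_offset n v w) \<noteq> (cyc_offset n v z < cyc_offset n v w)"
proof -
  obtain a b c' d where ab: "{v, w} = {a, b}" and cd: "{c, z} = {c', d}"
    and card: "card {a, b, c', d} = 4" and sep: "strictly_between a b c' \<noteq> strictly_between a b d"
    using assms(1) unfolding crosses_def by blast
  have "distinct [a, b, c', d]" using card by (rule card_4_imp_distinct)
  then have "distinct [v, w, c, z]" using ab cd by (auto simp: doubleton_eq_iff)
  moreover have "strictly_between v w c \<noteq> strictly_between v w z"
    using ab cd sep by (auto simp: doubleton_eq_iff strictly_between_commute)
  ultimately show ?thesis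
    using assms(2-) unfolding strictly_between_iff cyc_offset_def
    by (simp add: neq_iff) (elim disjE conjE; simp; linarith)
qed

lemma walk_singleton [simp]: "walk T [x]"
  by (simp add: walk_def)

lemma walk_Cons: "ys \<noteq> [] \<Longrightarrow> walk T (x # ys) \<longleftrightarrow> {x, hd ys} \<in> T \<and> walk T ys"
  by (cases ys) (auto simp: walk_def nth_Cons split: nat.splits)

lemma walk_take: "walk T xs \<Longrightarrow> 0 < k \<Longrightarrow> walk T (take k xs)"
  unfolding walk_def by auto

lemma walk_rev: "walk T xs \<Longrightarrow> walk T (rev xs)"
  unfolding walk_def
proof (intro conjI allI impI)
  fix i assume walk: "xs \<noteq> [] \<and> (\<forall>i. Suc i < length xs \<longrightarrow> {xs ! i, xs ! Suc i} \<in> T)"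
    and i: "Suc i < length (rev xs)"
  define j where "j = length xs - Suc (Suc i)"
  have "{xs ! j, xs ! Suc j} \<in> T" using walk i by (simp add: j_def)
  moreover have "rev xs ! i = xs ! Suc j" "rev xs ! Suc i = xs ! j"
    using i by (simp_all add: rev_nth j_def Suc_diff_Suc)
  ultimately show "{rev xs ! i, rev xs ! Suc i} \<in> T" by (simp add: insert_commute)
qed simp

fun lazy_walk :: "nat set set \<Rightarrow> nat list \<Rightarrow> bool" where
  "lazy_walk T (x # y # zs) \<longleftrightarrow> (x = y \<or> {x, y} \<in> T) \<and> lazy_walk T (y # zs)"
| "lazy_walk T _ \<longleftrightarrow> True"

lemma walk_remdups_adj: "xs \<noteq> [] \<Longrightarrow> lazy_walk T xs \<Longrightarrow> walk T (remdups_adj xs)"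
  by (induction xs rule: remdups_adj.induct) (auto simp: walk_Cons)

lemma not_has_cycle_if_two_branch_vertices:
  assumes branching: "\<And>x p q. {x, p} \<in> T \<Longrightarrow> {x, q} \<in> T \<Longrightarrow> p \<noteq> q \<Longrightarrow> x = v \<or> x = c"
  shows "\<not> has_cycle T"
proof
  assume "has_cycle T"
  then obtain xs where walk: "walk T xs" and dist: "distinct xs" and len: "3 \<le> length xs"
    and closing: "{last xs, hd xs} \<in> T"
    unfolding has_cycle_def gpath_def by blast
  define L where "L = length xs"
  have L: "3 \<le> L" using len by (simp add: L_def)
  have step: "\<And>i. Suc i < L \<Longrightarrow> {xs ! i, xs ! Suc i} \<in> T"
    using walk unfolding walk_def L_def by blast
  have "xs \<noteq> []" using len by auto
  then have close: "{xs ! (L - 1), xs ! 0} \<in> T"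
    using closing by (simp add: L_def last_conv_nth hd_conv_nth)
  have ne: "\<And>i j. i < L \<Longrightarrow> j < L \<Longrightarrow> i \<noteq> j \<Longrightarrow> xs ! i \<noteq> xs ! j"
    using dist by (simp add: L_def nth_eq_iff_index_eq)
  have "xs ! 0 = v \<or> xs ! 0 = c"
    by (rule branching[of _ "xs ! 1" "xs ! (L - 1)"])
      (use step[of 0] close ne[of 1 "L - 1"] L in \<open>auto simp: insert_commute\<close>)
  moreover have "xs ! 1 = v \<or> xs ! 1 = c"
    by (rule branching[of _ "xs ! 0" "xs ! 2"])
      (use step[of 0] step[of 1] ne[of 0 2] L in \<open>auto simp: insert_commute numeral_2_eq_2\<close>)
  moreover have "xs ! 2 = v \<or> xs ! 2 = c"
  proof (cases "L = 3")
    case True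
    show ?thesis
      by (rule branching[of _ "xs ! 1" "xs ! 0"])
        (use step[of 1] close ne[of 1 0] True in \<open>auto simp: insert_commute numeral_eq_Suc\<close>)
  next
    case False
    show ?thesis
      by (rule branching[of _ "xs ! 1" "xs ! 3"])
        (use step[of 1] step[of 2] ne[of 1 3] False L in \<open>auto simp: insert_commute numeral_eq_Suc\<close>)
  qed
  ultimately show False using ne[of 0 1] ne[of 0 2] ne[of 1 2] L by auto
qed

lemma card_2_obtain_other:
  assumes "card e = 2" "x \<in> e"
  obtains y where "y \<noteq> x" "e = {x, y}"
proof -
  obtain p q where "e = {p, q}" "p \<noteq> q" using assms(1) card_2_iff by metis
  then have "e = {x, if x = p then q else p}" "(if x = p then q else p) \<noteq> x"
    using assms(2) by auto
  then show thesis by (rule that[rotated])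
qed

lemma leaf_unique_edge:
  assumes "v \<in> leaves B" "\<forall>e\<in>B. card e = 2"
  obtains u where "u \<noteq> v" "{v, u} \<in> B" "\<forall>e\<in>B. v \<in> e \<longrightarrow> e = {v, u}"
proof -
  have "card {e \<in> B. v \<in> e} = 1" using assms(1) by (simp add: leaves_def degree_def)
  then obtain e where e: "{e' \<in> B. v \<in> e'} = {e}" by (auto simp: card_1_singleton_iff)
  then have "e \<in> B" "v \<in> e" by auto
  then obtain u where "u \<noteq> v" "e = {v, u}" using assms(2) card_2_obtain_other by metis
  then show thesis using that e by blast
qed

lemma two_edges_not_leaf:
  assumes "finite B" "{x, p} \<in> B" "{x, q} \<in> B" "p \<noteq> q"
  shows "x \<notin> leaves B"
proof -
  have "card {{x, p}, {x, q}} = 2" using assms(4) by (simp add: doubleton_eq_iff)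
  moreover have "card {{x, p}, {x, q}} \<le> degree B x"
    unfolding degree_def using assms(1-3) by (intro card_mono) auto
  ultimately show ?thesis by (simp add: leaves_def)
qed

lemma gpath_inner_not_leaf:
  assumes "finite B" "gpath B P" "0 < i" "Suc i < length P"
  shows "P ! i \<notin> leaves B"
proof (rule two_edges_not_leaf)
  show "{P ! i, P ! (i - 1)} \<in> B" "{P ! i, P ! Suc i} \<in> B"
    using assms(2-) unfolding gpath_def walk_def by (auto simp: insert_commute dest: spec[of _ "i - 1"])
  show "P ! (i - 1) \<noteq> P ! Suc i"
    using assms(2-) by (simp add: gpath_def nth_eq_iff_index_eq)
qed fact

lemma spine_rev: "is_spine B P \<Longrightarrow> is_spine B (rev P)"
  unfolding is_spine_def gpath_def using walk_rev by (metis distinct_rev length_rev)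

lemma spine_first_edge:
  assumes spine: "is_spine B P" and acyclic: "\<not> has_cycle B" and edges: "\<forall>e\<in>B. card e = 2"
    and L: "2 \<le> length P" and e: "e \<in> B" "P ! 0 \<in> e"
  shows "e = {P ! 0, P ! 1}"
proof -
  obtain w where w: "w \<noteq> P ! 0" "e = {P ! 0, w}" using edges e card_2_obtain_other by metis
  have path: "gpath B P" and longest: "\<And>Q. gpath B Q \<Longrightarrow> length Q \<le> length P"
    using spine unfolding is_spine_def by auto
  have hd: "hd P = P ! 0" using L by (cases P) auto
  show ?thesis
  proof (cases "w \<in> set P")
    case False
    have "P \<noteq> []" using L by auto
    then have "walk B (w # P)" using path w e hd by (simp add: gpath_def walk_Cons insert_commute)
    then have "gpath B (w # P)" using path False by (simp add: gpath_def)
    then show ?thesis using longest by fastforce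
  next
    case True
    then obtain k where k: "k < length P" "P ! k = w" by (auto simp: in_set_conv_nth)
    have "k \<noteq> 0" using k(2) w(1) by metis
    show ?thesis
    proof (cases "k = 1")
      case True
      then show ?thesis using w k by simp
    next
      case False
      let ?Q = "take (Suc k) P"
      have "hd ?Q = P ! 0" using hd by simp
      moreover have "last ?Q = P ! k" using k by (simp add: take_Suc_conv_app_nth)
      ultimately have "{last ?Q, hd ?Q} \<in> B" using k w e by (simp add: insert_commute)
      moreover have "gpath B ?Q" using path by (simp add: gpath_def walk_take)
      moreover have "3 \<le> length ?Q" using k \<open>k \<noteq> 0\<close> False by simp
      ultimately have "has_cycle B" unfolding has_cycle_def by (intro exI[of _ ?Q]) simp
      then show ?thesis using acyclic by contradiction
    qed
  qed
qed

lemma finite_cvx_edges: "finite (cvx_edges n)"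
  by (rule finite_subset[of _ "Pow {..<n}"]) (auto simp: cvx_edges_def)

lemma mem_cvx_edges: "{x, y} \<in> cvx_edges n \<longleftrightarrow> x < n \<and> y < n \<and> x \<noteq> y"
proof
  assume "{x, y} \<in> cvx_edges n"
  then obtain p q where "{x, y} = {p, q}" "p < n" "q < n" "p \<noteq> q"
    unfolding cvx_edges_def by blast
  then show "x < n \<and> y < n \<and> x \<noteq> y" by (auto simp: doubleton_eq_iff)
qed (auto simp: cvx_edges_def)

definition double_star :: "nat \<Rightarrow> nat \<Rightarrow> nat \<Rightarrow> nat set \<Rightarrow> nat set set" where
  "double_star n v c S = insert {v, c} ((\<lambda>z. {c, z}) ` S \<union> (\<lambda>w. {v, w}) ` ({..<n} - S - {v, c}))"

lemma double_star_cases: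
  assumes "e \<in> double_star n v c S"
  obtains "e = {v, c}" | z where "z \<in> S" "e = {c, z}"
    | w where "w < n" "w \<notin> S" "w \<noteq> v" "w \<noteq> c" "e = {v, w}"
proof -
  consider "e = {v, c}" | "e \<in> (\<lambda>z. {c, z}) ` S" | "e \<in> (\<lambda>w. {v, w}) ` ({..<n} - S - {v, c})"
    using assms unfolding double_star_def by blast
  then show thesis
  proof cases
    case 2
    then show thesis using that(2) by blast
  next
    case 3
    then obtain w where w: "w \<in> {..<n} - S - {v, c}" "e = {v, w}" by blast
    then have "w < n" "w \<notin> S" "w \<noteq> v" "w \<noteq> c" by auto
    then show thesis using w(2) by (rule that(3))
  qed (rule that(1))
qed

context
  fixes n v c :: nat and S :: "nat set"
  assumes v: "v < n" and c: "c < n" "v \<noteq> c" and S: "S \<subseteq> {..<n}" "v \<notin> S" "c \<notin> S"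
begin

definition hub :: "nat \<Rightarrow> nat" where
  "hub x = (if x = v \<or> x = c then x else if x \<in> S then c else v)"

lemma hub_edge: "x < n \<Longrightarrow> x \<noteq> hub x \<Longrightarrow> {x, hub x} \<in> double_star n v c S"
  unfolding hub_def double_star_def by (auto simp: insert_commute split: if_splits)

lemma double_star_neighbour:
  "{x, p} \<in> double_star n v c S \<Longrightarrow> x \<noteq> v \<Longrightarrow> x \<noteq> c \<Longrightarrow> p = hub x"
  by (erule double_star_cases) (auto simp: hub_def doubleton_eq_iff)

lemma double_star_subset_cvx_edges: "double_star n v c S \<subseteq> cvx_edges n"
  using v c S by (auto elim!: double_star_cases simp: mem_cvx_edges)

lemma hub_centre: "hub x = v \<or> hub x = c"
  by (simp add: hub_def)

lemma double_star_diam: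
  assumes "p < n" "q < n"
  shows "\<exists>xs. walk (double_star n v c S) xs \<and> hd xs = p \<and> last xs = q \<and> length xs \<le> Suc 3"
proof -
  let ?T = "double_star n v c S"
  let ?xs = "[p, hub p, hub q, q]"
  have "{v, c} \<in> ?T" by (simp add: double_star_def)
  then have "hub p = hub q \<or> {hub p, hub q} \<in> ?T"
    using hub_centre[of p] hub_centre[of q] by (auto simp: insert_commute)
  moreover have "p = hub p \<or> {p, hub p} \<in> ?T" using hub_edge assms(1) by blast
  moreover have "hub q = q \<or> {hub q, q} \<in> ?T" using hub_edge assms(2) by (metis insert_commute)
  ultimately have "lazy_walk ?T ?xs" by simp
  from walk_remdups_adj[OF list.distinct(2) this]
  have "walk ?T (remdups_adj ?xs)" .
  moreover have "hd (remdups_adj ?xs) = p" "last (remdups_adj ?xs) = q"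
    unfolding hd_remdups_adj last_remdups_adj by simp_all
  moreover have "length (remdups_adj ?xs) \<le> Suc 3"
    using remdups_adj_length[of ?xs] by (simp only: list.size numeral_eq_Suc add_Suc_right) simp
  ultimately show ?thesis by blast
qed

lemma double_star_in_trees:
  assumes noncrossing: "\<And>w z. w < n \<Longrightarrow> w \<notin> S \<Longrightarrow> w \<noteq> v \<Longrightarrow> w \<noteq> c \<Longrightarrow> z \<in> S \<Longrightarrow>
    \<not> crosses {v, w} {c, z}"
  shows "double_star n v c S \<in> simple_trees_diam n 3"
proof -
  let ?T = "double_star n v c S"
  have diam: "diam_le (cvx_vertices n) ?T 3"
    using double_star_diam by (simp add: diam_le_def cvx_vertices_def)
  then have "connected_on (cvx_vertices n) ?T"
    unfolding diam_le_def connected_on_def by blast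
  moreover have "\<forall>e\<in>?T. card e = 2 \<and> e \<subseteq> cvx_vertices n"
    using double_star_subset_cvx_edges by (auto simp: cvx_edges_def cvx_vertices_def)
  moreover have "\<not> has_cycle ?T"
    by (rule not_has_cycle_if_two_branch_vertices[where v = v and c = c]) (metis double_star_neighbour)
  moreover have "noncrossing ?T"
  proof -
    have "\<not> crosses e f" if "e \<in> ?T" "f \<in> ?T" "v \<notin> e" for e f
    proof
      assume cross: "crosses e f"
      obtain z where z: "z \<in> S" "e = {c, z}" using \<open>e \<in> ?T\<close> \<open>v \<notin> e\<close> by (auto elim: double_star_cases)
      then have "c \<notin> f" using crosses_disjoint[OF cross] by auto
      then obtain w where "w < n" "w \<notin> S" "w \<noteq> v" "w \<noteq> c" "f = {v, w}"
        using \<open>f \<in> ?T\<close> by (auto elim: double_star_cases)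
      then show False using noncrossing z crosses_sym[OF cross] by blast
    qed
    moreover have "v \<notin> e \<or> v \<notin> f" if "crosses e f" for e f
      using crosses_disjoint[OF that] by blast
    ultimately show ?thesis unfolding noncrossing_def by (metis crosses_sym)
  qed
  ultimately show ?thesis
    using double_star_subset_cvx_edges diam by (simp add: simple_trees_diam_def is_tree_def)
qed

end

lemma blocks_pendant_edges_same_side:
  assumes blocks: "blocks n B (simple_trees_diam n 3)"
    and v: "v < n" and c: "c < n" "v \<noteq> c" "u \<noteq> c"
    and v_edge: "\<forall>e\<in>B. v \<in> e \<longrightarrow> e = {v, u}" and c_edge: "\<forall>e\<in>B. c \<in> e \<longrightarrow> e = {c, c'}"
  shows "(cyc_offset n v u < cyc_offset n v c) = (cyc_offset n v c' < cyc_offset n v c)"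
proof (rule ccontr)
  assume opposite: "(cyc_offset n v u < cyc_offset n v c) \<noteq> (cyc_offset n v c' < cyc_offset n v c)"
  define D where "D = cyc_offset n v"
  define S where "S = {w. w < n \<and> w \<noteq> v \<and> w \<noteq> c \<and> (D w < D c \<longleftrightarrow> D u < D c)}"
  have "double_star n v c S \<in> simple_trees_diam n 3"
  proof (rule double_star_in_trees)
    fix w z assume w: "w < n" "w \<notin> S" "w \<noteq> v" "w \<noteq> c" and z: "z \<in> S"
    have z': "z < n" "z \<noteq> c" "(D z < D c) = (D u < D c)" using z by (simp_all add: S_def)
    have "D w \<noteq> D c" "D z \<noteq> D c"
      using cyc_offset_inj[OF v w(1) c(1)] cyc_offset_inj[OF v z'(1) c(1)] w(4) z'(2)
      by (simp_all add: D_def)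
    moreover have "(D w < D c) \<noteq> (D u < D c)" using w by (simp add: S_def)
    ultimately have "(D c < D w) = (D z < D w)" using z'(3) by linarith
    then show "\<not> crosses {v, w} {c, z}"
      using crosses_cyc_offset[OF _ v w(1) c(1) z'(1)] unfolding D_def by blast
  qed (use v c in \<open>auto simp: S_def\<close>)
  then obtain e where "e \<in> B" "e \<in> double_star n v c S"
    using blocks by (auto simp: blocks_def)
  from this(2) show False
  proof (cases rule: double_star_cases)
    case 1
    then have "{v, c} = {v, u}" using v_edge[rule_format, OF \<open>e \<in> B\<close>] by simp
    then show False using c by (auto simp: doubleton_eq_iff)
  next
    case (2 z)
    then have "{c, z} = {c, c'}" using c_edge[rule_format, OF \<open>e \<in> B\<close>] by simp
    then have "z = c'" using \<open>z \<in> S\<close> by (auto simp: S_def doubleton_eq_iff)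
    then show False using \<open>z \<in> S\<close> opposite by (simp add: S_def D_def)
  next
    case (3 w)
    then have "{v, w} = {v, u}" using v_edge[rule_format, OF \<open>e \<in> B\<close>] by simp
    then have "w = u" using \<open>w \<noteq> v\<close> by (auto simp: doubleton_eq_iff)
    then show False using 3 c by (simp add: S_def)
  qed
qed

lemma far_arc_opposite_side:
  fixes n v :: nat
  defines "D \<equiv> cyc_offset n v"
  assumes lt: "a < n" "a' < n" "b < n" "b' < n" "v < n" "u < n"
    and hull: "{a, a'} \<in> hull_edges n" "{b, b'} \<in> hull_edges n"
    and alpha: "a' \<in> cyc_arc n a b" "b' \<in> cyc_arc n a b"
    and beta: "v \<notin> cyc_arc n b a"
    and ne: "a \<noteq> b" "v \<noteq> a'" "v \<noteq> b'" "u \<noteq> a" "u \<noteq> b" and ends: "a' = b \<longleftrightarrow> b' = a"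
  shows "(D u < D a) \<noteq> (D a' < D a) \<or> (D u < D b) \<noteq> (D b' < D b)"
proof -
  have D_inj: "\<And>x y. x < n \<Longrightarrow> y < n \<Longrightarrow> D x = D y \<longleftrightarrow> x = y"
    using lt(5) cyc_offset_inj by (simp add: D_def)
  have "a \<in> cyc_arc n b a" "b \<in> cyc_arc n b a" using cyc_arc_endpoints lt(1,3) by simp_all
  then have "a \<noteq> v" "b \<noteq> v" using beta by auto
  have "\<not> (if D b \<le> D a then D b \<le> D v \<and> D v \<le> D a else D b \<le> D v \<or> D v \<le> D a)"
    using beta mem_cyc_arc_iff_from[of v n b v a] lt unfolding D_def by blast
  moreover have "D v = 0" by (simp add: D_def cyc_offset_def)
  moreover have "D b \<noteq> D a" "D b \<noteq> D v" using D_inj lt ne(1) \<open>b \<noteq> v\<close> by auto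
  ultimately have "D b < D a" by (auto split: if_splits)
  \<comment> \<open>seen from v, the arc from a to b consists of the offsets \<open>\<ge> D a\<close> or \<open>\<le> D b\<close>\<close>
  then have "D a \<le> D a' \<or> D a' \<le> D b" "D a \<le> D b' \<or> D b' \<le> D b"
    using alpha mem_cyc_arc_iff_from[of v n a a' b] mem_cyc_arc_iff_from[of v n a b' b] lt
    unfolding D_def by simp_all
  moreover have "D a' = D a + 1 \<or> D a = D a' + 1" "D b' = D b + 1 \<or> D b = D b' + 1"
    using hull_edge_cyc_offset[OF hull(1) lt(5) \<open>a \<noteq> v\<close> ne(2)[symmetric]]
      hull_edge_cyc_offset[OF hull(2) lt(5) \<open>b \<noteq> v\<close> ne(3)[symmetric]]
    unfolding D_def by simp_all
  moreover have "D a' = D b \<longleftrightarrow> D b' = D a" "D u \<noteq> D a" "D u \<noteq> D b"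
    using D_inj lt ends ne(4,5) by auto
  ultimately show ?thesis using \<open>D b < D a\<close> by arith
qed

lemma unique_edge_neighbour: "\<forall>e\<in>B. x \<in> e \<longrightarrow> e = {x, x'} \<Longrightarrow> {x, y} \<in> B \<Longrightarrow> y = x'"
  by (auto simp: doubleton_eq_iff)

lemma leaf_in_far_arc:
  assumes blocks: "blocks n B (simple_trees_diam n 3)"
    and edges: "\<forall>e\<in>B. card e = 2"
    and a: "\<forall>e\<in>B. a \<in> e \<longrightarrow> e = {a, a'}" "{a, a'} \<in> B" "{a, a'} \<in> hull_edges n"
    and b: "\<forall>e\<in>B. b \<in> e \<longrightarrow> e = {b, b'}" "{b, b'} \<in> B" "{b, b'} \<in> hull_edges n"
    and alpha: "a' \<in> cyc_arc n a b" "b' \<in> cyc_arc n a b"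
    and "a \<noteq> b"
    and leaf: "v \<in> leaves B" "v \<noteq> a'" "v \<noteq> b'"
  shows "v \<in> cyc_arc n b a"
proof (rule ccontr)
  assume beta: "v \<notin> cyc_arc n b a"
  obtain u where u: "{v, u} \<in> B" "\<forall>e\<in>B. v \<in> e \<longrightarrow> e = {v, u}"
    using leaf_unique_edge[OF leaf(1) edges] by blast
  have "B \<subseteq> cvx_edges n" using blocks by (simp add: blocks_def)
  then have lt: "a < n" "a' < n" "b < n" "b' < n" "v < n" "u < n"
    using a(2) b(2) u(1) by (auto simp: mem_cvx_edges)
  then have "a \<noteq> v" "b \<noteq> v" using beta cyc_arc_endpoints[of b n a] by auto
  have "u \<noteq> a" "u \<noteq> b"
    using unique_edge_neighbour[OF a(1), of v] unique_edge_neighbour[OF b(1), of v] u(1) leaf(2,3)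
    by (auto simp: insert_commute)
  have "a' = b \<longleftrightarrow> b' = a"
    using unique_edge_neighbour[OF b(1), of a] unique_edge_neighbour[OF a(1), of b] a(2) b(2)
    by (auto simp: insert_commute)
  have "(cyc_offset n v u < cyc_offset n v a) = (cyc_offset n v a' < cyc_offset n v a)"
    "(cyc_offset n v u < cyc_offset n v b) = (cyc_offset n v b' < cyc_offset n v b)"
    using blocks_pendant_edges_same_side[OF blocks lt(5) lt(1) \<open>a \<noteq> v\<close>[symmetric] \<open>u \<noteq> a\<close> u(2) a(1)]
      blocks_pendant_edges_same_side[OF blocks lt(5) lt(3) \<open>b \<noteq> v\<close>[symmetric] \<open>u \<noteq> b\<close> u(2) b(1)]
    by simp_all
  then show False
    using far_arc_opposite_side[OF lt a(3) b(3) alpha beta \<open>a \<noteq> b\<close> leaf(2,3)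
        \<open>u \<noteq> a\<close> \<open>u \<noteq> b\<close> \<open>a' = b \<longleftrightarrow> b' = a\<close>]
    by blast
qed

lemma gpath_edge: "gpath B P \<Longrightarrow> Suc i < length P \<Longrightarrow> {P ! i, P ! Suc i} \<in> B"
  by (simp add: gpath_def walk_def)

lemma spine_length_ge_2:
  assumes "is_spine B P" "e \<in> B" "card e = 2"
  shows "2 \<le> length P"
proof -
  obtain x y where "e = {x, y}" "x \<noteq> y" using assms(3) card_2_iff by metis
  then have "gpath B [x, y]" using assms(2) by (simp add: gpath_def walk_Cons)
  then show ?thesis using assms(1) unfolding is_spine_def by fastforce
qed

lemma spine_second_vertex_leaf:
  assumes "finite B" "gpath B P" "2 \<le> length P" "v \<in> leaves B"
    and "v = P ! 1 \<or> v = P ! (length P - 2)"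
  shows "length P = 2"
proof (rule ccontr)
  assume "length P \<noteq> 2"
  then show False
    using assms gpath_inner_not_leaf[OF assms(1,2), of 1] gpath_inner_not_leaf[OF assms(1,2), of "length P - 2"]
    by auto
qed

lemma spine_leaf_in_far_arc:
  fixes P :: "nat list"
  defines "L \<equiv> length P"
  assumes blocks: "blocks n B (simple_trees_diam n 3)"
    and edges: "\<forall>e\<in>B. card e = 2" and acyclic: "\<not> has_cycle B"
    and spine: "is_spine B P"
    and hull: "{P ! 0, P ! 1} \<in> hull_edges n" "{P ! (L - 2), P ! (L - 1)} \<in> hull_edges n"
    and alpha: "P ! 1 \<in> cyc_arc n (P ! 0) (P ! (L - 1))" "P ! (L - 2) \<in> cyc_arc n (P ! 0) (P ! (L - 1))"
    and leaf: "v \<in> leaves B"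
  shows "v \<in> cyc_arc n (P ! (L - 1)) (P ! 0)"
proof -
  have "finite B" using blocks finite_cvx_edges finite_subset by (auto simp: blocks_def)
  have path: "gpath B P" using spine by (simp add: is_spine_def)
  obtain u where "{v, u} \<in> B" using leaf_unique_edge[OF leaf edges] by blast
  then have L: "2 \<le> L" using spine_length_ge_2[OF spine] edges by (auto simp: L_def)
  have rev_ends: "rev P ! 0 = P ! (L - 1)" "rev P ! 1 = P ! (L - 2)"
    using L by (subst rev_nth; auto simp: L_def numeral_2_eq_2)+
  have a_only: "\<forall>e\<in>B. P ! 0 \<in> e \<longrightarrow> e = {P ! 0, P ! 1}"
    using spine_first_edge[OF spine acyclic edges] L by (simp add: L_def)
  have b_only: "\<forall>e\<in>B. P ! (L - 1) \<in> e \<longrightarrow> e = {P ! (L - 1), P ! (L - 2)}"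
    using spine_first_edge[OF spine_rev[OF spine] acyclic edges, unfolded rev_ends length_rev] L
    unfolding L_def by blast
  have a_edge: "{P ! 0, P ! 1} \<in> B" and b_edge: "{P ! (L - 1), P ! (L - 2)} \<in> B"
    using gpath_edge[OF path, of 0] gpath_edge[OF path, of "L - 2"] L
    by (simp_all add: L_def Suc_diff_Suc numeral_2_eq_2 insert_commute)
  have "0 < L" "L - 1 < L" "0 \<noteq> L - 1" using L by auto
  then have "P ! 0 \<noteq> P ! (L - 1)" using path by (simp add: gpath_def L_def nth_eq_iff_index_eq)
  show ?thesis
  proof (cases "v = P ! 1 \<or> v = P ! (L - 2)")
    case True
    then have "L = 2" using spine_second_vertex_leaf[OF \<open>finite B\<close> path] L leaf by (simp add: L_def)
    moreover have "P ! 0 < n" "P ! (L - 1) < n"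
      using a_edge b_edge blocks by (auto simp: blocks_def mem_cvx_edges)
    ultimately show ?thesis using True cyc_arc_endpoints by (auto simp: numeral_2_eq_2)
  next
    case False
    show ?thesis
    proof (rule leaf_in_far_arc[OF blocks edges a_only a_edge _ b_only b_edge _ alpha])
      show "{P ! 0, P ! 1} \<in> hull_edges n" "{P ! (L - 1), P ! (L - 2)} \<in> hull_edges n"
        using hull by (simp_all add: insert_commute)
    qed (use False leaf \<open>P ! 0 \<noteq> P ! (L - 1)\<close> in auto)
  qed
qed

theorem claim1:
  fixes n :: nat and B :: "nat set set" and P :: "nat list" and \<alpha> \<beta> :: "nat set"
  assumes blocker: "is_blocker n B (simple_trees_diam n 3)"
    and not_star: "\<not> is_star n B"
    and cat: "caterpillar B"
    and spine: "is_spine B P"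
    and a_edge: "{P ! 0, P ! 1} \<in> hull_edges n"
    and b_edge: "{P ! (length P - 2), P ! (length P - 1)} \<in> hull_edges n"
    and a'b': "P ! 1 \<noteq> P ! (length P - 2)"
    and arcs: "(\<alpha> = cyc_arc n (P ! 0) (P ! (length P - 1)) \<and> \<beta> = cyc_arc n (P ! (length P - 1)) (P ! 0))
             \<or> (\<alpha> = cyc_arc n (P ! (length P - 1)) (P ! 0) \<and> \<beta> = cyc_arc n (P ! 0) (P ! (length P - 1)))"
    and alpha: "P ! 1 \<in> \<alpha>" "P ! (length P - 2) \<in> \<alpha>"
  shows "leaves B \<subseteq> \<beta>"
proof
  fix v assume leaf: "v \<in> leaves B"
  have blocks: "blocks n B (simple_trees_diam n 3)" using blocker by (simp add: is_blocker_def)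
  have edges: "\<forall>e\<in>B. card e = 2" and acyclic: "\<not> has_cycle B"
    using cat by (auto simp: caterpillar_def is_tree_def)
  note far_arc = spine_leaf_in_far_arc[OF blocks edges acyclic _ _ _ _ _ leaf]
  obtain u where "{v, u} \<in> B" using leaf_unique_edge[OF leaf edges] by blast
  then have "2 \<le> length P" using spine_length_ge_2[OF spine] edges by auto
  then have "rev P ! 0 = P ! (length P - 1)" "rev P ! 1 = P ! (length P - 2)"
    "rev P ! (length P - 2) = P ! 1" "rev P ! (length P - 1) = P ! 0"
    by (subst rev_nth; auto simp: numeral_2_eq_2)+
  \<comment> \<open>the second choice of arcs is the first one for the reversed spine\<close>
  with arcs show "v \<in> \<beta>"
    using far_arc[OF spine a_edge b_edge] far_arc[OF spine_rev[OF spine]] a_edge b_edge alpha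
    by (auto simp: insert_commute)
qed

end
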